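(* Let $\mathcal{D}$ be a set of discounting functions and let $\varphi$ be an $\mathrm{LTL}^{\mathrm{disc}}[\mathcal{D}]$ formula. Then there exist LTL formulas $\varphi_{>0}$ and $\varphi_{<1}$ such that $|\varphi_{>0}|$ and $|\varphi_{<1}|$ are both $O(|\varphi|)$ and the following hold for every computation $\pi$: (1) if $[\![\pi,\varphi]\!]>0$ then $\pi\models\varphi_{>0}$, and if $[\![\pi,\varphi]\!]<1$ then $\pi\models\varphi_{<1}$; (2) if $\pi$ is a lasso computation, then $\pi\models\varphi_{>0}$ implies $[\![\pi,\varphi]\!]>0$, and $\pi\models\varphi_{<1}$ implies $[\![\pi,\varphi]\!]<1$.
   Context: Let $AP$ be a finite set of atomic propositions. A computation is an infinite word $\pi=\pi_0\pi_1\pi_2\cdots\in(2^{AP})^\omega$, and $\pi^i=\pi_i\pi_{i+1}\cdots$ denotes its suffix from position $i$. A lasso computation is a computation of the form $u\cdot v^\omega$ with $u,v\in(2^{AP})^*$ and $v\neq\epsilon$. A discounting function is a strictly decreasing function $\eta:\mathbb{N}\to[0,1]$ (where $\mathbb{N}=\{0,1,\dots\}$) with $\lim_{i\to\infty}\eta(i)=0$. For a set $\mathcal{D}$ of discounting functions, the formulas of $\mathrm{LTL}^{\mathrm{disc}}[\mathcal{D}]$ are given by the grammar $\varphi ::= \mathtt{True}\mid p\mid\neg\varphi\mid\varphi\vee\varphi\mid\mathsf{X}\varphi\mid\varphi\,\mathsf{U}\,\varphi\mid\varphi\,\mathsf{U}_\eta\,\varphi$ with $p\in AP$, $\eta\in\mathcal{D}$.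 The satisfaction value $[\![\pi,\varphi]\!]\in[0,1]$ is defined inductively: $[\![\pi,\mathtt{True}]\!]=1$; $[\![\pi,p]\!]=1$ if $p\in\pi_0$ and $0$ otherwise; $[\![\pi,\neg\varphi]\!]=1-[\![\pi,\varphi]\!]$; $[\![\pi,\varphi\vee\psi]\!]=\max\{[\![\pi,\varphi]\!],[\![\pi,\psi]\!]\}$; $[\![\pi,\mathsf{X}\varphi]\!]=[\![\pi^1,\varphi]\!]$; $[\![\pi,\varphi\,\mathsf{U}\,\psi]\!]=\sup_{i\ge0}\min\{[\![\pi^i,\psi]\!],\min_{0\le j<i}[\![\pi^j,\varphi]\!]\}$; $[\![\pi,\varphi\,\mathsf{U}_\eta\,\psi]\!]=\sup_{i\ge0}\min\{\eta(i)[\![\pi^i,\psi]\!],\min_{0\le j<i}\eta(j)[\![\pi^j,\varphi]\!]\}$. An LTL formula is a formula without $\mathsf{U}_\eta$ operators; its value is always in $\{0,1\}$, and $\pi\models\psi$ means $[\![\pi,\psi]\!]=1$ (standard LTL satisfaction). $|\varphi|$ denotes the number of subformulas of $\varphi$. *)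

theory Defs
  imports Complex_Main
begin

datatype 'a ltld =
    TT
  | Prop 'a
  | Neg "'a ltld"
  | Or "'a ltld" "'a ltld"
  | Next "'a ltld"
  | Until "'a ltld" "'a ltld"
  | UntilD "nat \<Rightarrow> real" "'a ltld" "'a ltld"

type_synonym 'a computation = "nat \<Rightarrow> 'a set"

definition suffix :: "nat \<Rightarrow> 'a computation \<Rightarrow> 'a computation" where
  "suffix i \<pi> = (\<lambda>n. \<pi> (i + n))"

definition discounting :: "(nat \<Rightarrow> real) \<Rightarrow> bool" where
  "discounting \<eta> \<longleftrightarrow> (\<forall>i j. i < j \<longrightarrow> \<eta> j < \<eta> i) \<and> (\<forall>i. 0 \<le> \<eta> i \<and> \<eta> i \<le> 1)
      \<and> \<eta> \<longlonglongrightarrow> 0"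

text \<open>Minimum over j < i with the empty minimum equal to 1 (all values lie in [0,1]).\<close>
definition min_below :: "nat \<Rightarrow> (nat \<Rightarrow> real) \<Rightarrow> real" where
  "min_below i f = Min (insert 1 (f ` {..<i}))"

primrec val :: "'a ltld \<Rightarrow> 'a computation \<Rightarrow> real" where
  "val TT \<pi> = 1"
| "val (Prop p) \<pi> = (if p \<in> \<pi> 0 then 1 else 0)"
| "val (Neg \<phi>) \<pi> = 1 - val \<phi> \<pi>"
| "val (Or \<phi> \<psi>) \<pi> = max (val \<phi> \<pi>) (val \<psi> \<pi>)"
| "val (Next \<phi>) \<pi> = val \<phi> (suffix 1 \<pi>)"
| "val (Until \<phi> \<psi>) \<pi> =
     (SUP i. min (val \<psi> (suffix i \<pi>)) (min_below i (\<lambda>j. val \<phi> (suffix j \<pi>))))"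
| "val (UntilD \<eta> \<phi> \<psi>) \<pi> =
     (SUP i. min (\<eta> i * val \<psi> (suffix i \<pi>)) (min_below i (\<lambda>j. \<eta> j * val \<phi> (suffix j \<pi>))))"

definition models :: "'a computation \<Rightarrow> 'a ltld \<Rightarrow> bool" where
  "models \<pi> \<phi> \<longleftrightarrow> val \<phi> \<pi> = 1"

primrec disc_funs :: "'a ltld \<Rightarrow> (nat \<Rightarrow> real) set" where
  "disc_funs TT = {}"
| "disc_funs (Prop p) = {}"
| "disc_funs (Neg \<phi>) = disc_funs \<phi>"
| "disc_funs (Or \<phi> \<psi>) = disc_funs \<phi> \<union> disc_funs \<psi>"
| "disc_funs (Next \<phi>) = disc_funs \<phi>"
| "disc_funs (Until \<phi> \<psi>) = disc_funs \<phi> \<union> disc_funs \<psi>"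
| "disc_funs (UntilD \<eta> \<phi> \<psi>) = insert \<eta> (disc_funs \<phi> \<union> disc_funs \<psi>)"

definition is_ltld_over :: "(nat \<Rightarrow> real) set \<Rightarrow> 'a ltld \<Rightarrow> bool" where
  "is_ltld_over D \<phi> \<longleftrightarrow> disc_funs \<phi> \<subseteq> D"

definition is_ltl :: "'a ltld \<Rightarrow> bool" where
  "is_ltl \<phi> \<longleftrightarrow> disc_funs \<phi> = {}"

primrec subformulas :: "'a ltld \<Rightarrow> 'a ltld set" where
  "subformulas TT = {TT}"
| "subformulas (Prop p) = {Prop p}"
| "subformulas (Neg \<phi>) = insert (Neg \<phi>) (subformulas \<phi>)"
| "subformulas (Or \<phi> \<psi>) = insert (Or \<phi> \<psi>) (subformulas \<phi> \<union> subformulas \<psi>)"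
| "subformulas (Next \<phi>) = insert (Next \<phi>) (subformulas \<phi>)"
| "subformulas (Until \<phi> \<psi>) = insert (Until \<phi> \<psi>) (subformulas \<phi> \<union> subformulas \<psi>)"
| "subformulas (UntilD \<eta> \<phi> \<psi>) = insert (UntilD \<eta> \<phi> \<psi>) (subformulas \<phi> \<union> subformulas \<psi>)"

definition fsize :: "'a ltld \<Rightarrow> nat" where
  "fsize \<phi> = card (subformulas \<phi>)"

text \<open>Lasso computation u v^omega with v nonempty.\<close>
definition lasso :: "'a computation \<Rightarrow> bool" where
  "lasso \<pi> \<longleftrightarrow> (\<exists>u v. v \<noteq> [] \<and>
     (\<forall>n. \<pi> n = (if n < length u then u ! n else v ! ((n - length u) mod length v))))"

end

theory Submission
  imports Defs
begin

text \<open>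
  Two LTL formulas are built by one mutual recursion: \<open>ltl_pos \<phi>\<close> expresses \<open>val \<phi> \<pi> > 0\<close> and
  \<open>ltl_one \<phi>\<close> expresses \<open>val \<phi> \<pi> = 1\<close>; negation swaps them, and \<open>\<phi>\<^sub><\<^sub>1\<close> is \<open>Neg (ltl_one \<phi>)\<close>.
  Since discounting functions are positive, a discounted until is positive exactly when the
  ordinary until of the positive parts holds; since \<open>\<eta> 1 < \<eta> 0 \<le> 1\<close>, it has value 1 exactly
  when \<open>\<eta> 0 = 1\<close> and its right argument has value 1 now. In general each translation is exact in
  one direction only: an until whose terms are all below 1 may still have supremum 1. On a lasso
  only finitely many suffixes occur, so every supremum is attained and both directions hold.
\<close>

section \<open>Weighted until values\<close>

definition unit_valued :: "(nat \<Rightarrow> real) \<Rightarrow> bool" where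
  "unit_valued f \<longleftrightarrow> (\<forall>i. 0 \<le> f i \<and> f i \<le> 1)"

definition until_val :: "(nat \<Rightarrow> real) \<Rightarrow> (nat \<Rightarrow> real) \<Rightarrow> (nat \<Rightarrow> real) \<Rightarrow> real" where
  "until_val w f g = (SUP i. min (w i * g i) (min_below i (\<lambda>j. w j * f j)))"

lemma min_below_0 [simp]: "min_below 0 f = 1"
  by (simp add: min_below_def)

lemma min_below_le: "j < i \<Longrightarrow> min_below i f \<le> f j"
  by (simp add: min_below_def)

lemma min_below_le_1: "min_below i f \<le> 1"
  by (simp add: min_below_def)

lemma min_below_nonneg: "(\<And>j. 0 \<le> f j) \<Longrightarrow> 0 \<le> min_below i f"
  by (simp add: min_below_def)

lemma min_below_pos_iff: "0 < min_below i f \<longleftrightarrow> (\<forall>j<i. 0 < f j)"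
  by (auto simp: min_below_def)

lemma min_below_in: "min_below i f \<in> insert 1 (range f)"
proof -
  have "Min (insert 1 (f ` {..<i})) \<in> insert 1 (f ` {..<i})"
    by (rule Min_in) auto
  then show ?thesis
    unfolding min_below_def by auto
qed

lemma min_below_eq_1_iff:
  assumes "\<And>j. f j \<le> 1"
  shows "min_below i f = 1 \<longleftrightarrow> (\<forall>j<i. f j = 1)"
proof
  assume "min_below i f = 1"
  then show "\<forall>j<i. f j = 1"
    using min_below_le[of _ i f] assms by (metis order_antisym)
next
  assume "\<forall>j<i. f j = 1"
  then have "insert 1 (f ` {..<i}) = {1}" by auto
  then show "min_below i f = 1"
    by (simp only: min_below_def Min_singleton)
qed

lemma unit_valued_mult: "unit_valued w \<Longrightarrow> unit_valued f \<Longrightarrow> unit_valued (\<lambda>i. w i * f i)"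
  by (simp add: unit_valued_def mult_le_one)

lemma until_term_unit_interval:
  assumes "unit_valued w" "unit_valued f" "unit_valued g"
  shows "0 \<le> min (w i * g i) (min_below i (\<lambda>j. w j * f j))"
    and "min (w i * g i) (min_below i (\<lambda>j. w j * f j)) \<le> 1"
  using unit_valued_mult[OF assms(1,2)] unit_valued_mult[OF assms(1,3)]
  by (auto simp: unit_valued_def min_le_iff_disj intro: min_below_nonneg)

lemma until_term_le_until_val:
  assumes "unit_valued w" "unit_valued f" "unit_valued g"
  shows "min (w i * g i) (min_below i (\<lambda>j. w j * f j)) \<le> until_val w f g"
  unfolding until_val_def
  by (rule cSUP_upper) (auto intro: bdd_aboveI2 until_term_unit_interval[OF assms])

lemma until_val_le_1:
  assumes "unit_valued w" "unit_valued f" "unit_valued g"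
  shows "until_val w f g \<le> 1"
  unfolding until_val_def
  by (rule cSUP_least) (auto intro: until_term_unit_interval[OF assms])

lemma until_val_nonneg:
  assumes "unit_valued w" "unit_valued f" "unit_valued g"
  shows "0 \<le> until_val w f g"
  using until_term_unit_interval(1)[OF assms, of 0] until_term_le_until_val[OF assms, of 0]
  by linarith

lemma until_val_pos_iff:
  assumes "\<And>i. 0 < w i" "unit_valued w" "unit_valued f" "unit_valued g"
  shows "0 < until_val w f g \<longleftrightarrow> (\<exists>i. 0 < g i \<and> (\<forall>j<i. 0 < f j))"
proof -
  have "0 < until_val w f g \<longleftrightarrow> (\<exists>i. 0 < min (w i * g i) (min_below i (\<lambda>j. w j * f j)))"
    unfolding until_val_def
    by (subst less_cSUP_iff) (auto intro: bdd_aboveI2 until_term_unit_interval[OF assms(2-4)])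
  also have "\<dots> \<longleftrightarrow> (\<exists>i. 0 < g i \<and> (\<forall>j<i. 0 < f j))"
    using assms(1) by (simp add: min_below_pos_iff zero_less_mult_iff) (meson less_asym)
  finally show ?thesis .
qed

lemma until_val_eq_1_if:
  assumes "unit_valued f" "unit_valued g" "g i = 1" "\<forall>j<i. f j = 1"
  shows "until_val (\<lambda>_. 1) f g = 1"
proof -
  have w: "unit_valued (\<lambda>_. 1)" by (simp add: unit_valued_def)
  have "min (1 * g i) (min_below i (\<lambda>j. 1 * f j)) = 1"
    using assms min_below_eq_1_iff[of f i] by (simp add: unit_valued_def)
  then show ?thesis
    using until_term_le_until_val[OF w assms(1,2), of i] until_val_le_1[OF w assms(1,2)]
    by linarith
qed

lemma until_val_eq_1_imp:
  assumes "finite (range f)" "finite (range g)" "unit_valued f" "unit_valued g"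
    and "until_val (\<lambda>_. 1) f g = 1"
  shows "\<exists>i. g i = 1 \<and> (\<forall>j<i. f j = 1)"
proof -
  define t where "t i = min (g i) (min_below i f)" for i
  have "range t \<subseteq> (\<lambda>(x, y). min x y) ` (range g \<times> insert 1 (range f))"
    using min_below_in by (fastforce simp: t_def)
  then have "finite (range t)"
    by (rule finite_subset) (simp add: assms(1,2))
  then have "Sup (range t) \<in> range t"
    using Max_in[of "range t"] cSup_eq_Max[of "range t"] by auto
  moreover have "Sup (range t) = 1"
    using assms(5) by (simp add: until_val_def t_def)
  ultimately obtain i where "min (g i) (min_below i f) = 1"
    by (auto simp: t_def)
  moreover have "\<And>j. f j \<le> 1" "g i \<le> 1"
    using assms(3,4) by (auto simp: unit_valued_def)
  ultimately show ?thesis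
    using min_below_le_1[of i f] min_below_eq_1_iff[of f i] by (auto simp: min_def split: if_splits)
qed

lemma discounting_pos: "discounting \<eta> \<Longrightarrow> 0 < \<eta> i"
  unfolding discounting_def by (metis lessI order_le_less_trans)

lemma discounting_unit_valued: "discounting \<eta> \<Longrightarrow> unit_valued \<eta>"
  by (simp add: discounting_def unit_valued_def)

lemma discounting_antimono: "discounting \<eta> \<Longrightarrow> i \<le> j \<Longrightarrow> \<eta> j \<le> \<eta> i"
  unfolding discounting_def by (metis order_le_less order_less_imp_le)

lemma until_val_discounted_eq_1_iff:
  assumes \<eta>: "discounting \<eta>" and f: "unit_valued f" and g: "unit_valued g"
  shows "until_val \<eta> f g = 1 \<longleftrightarrow> \<eta> 0 = 1 \<and> g 0 = 1"
proof -
  have \<eta>_unit: "unit_valued \<eta>"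
    using \<eta> by (rule discounting_unit_valued)
  have g0: "0 \<le> g 0" "g 0 \<le> 1" and \<eta>0: "\<eta> 0 \<le> 1"
    using g \<eta>_unit by (auto simp: unit_valued_def)
  have \<eta>1: "\<eta> 1 < \<eta> 0"
    using \<eta> by (simp add: discounting_def)
  have lower: "\<eta> 0 * g 0 \<le> until_val \<eta> f g"
    using until_term_le_until_val[OF \<eta>_unit f g, of 0] g0 \<eta>0 by (simp add: mult_le_one)
  have upper: "until_val \<eta> f g \<le> max (\<eta> 0 * g 0) (\<eta> 1)"
    unfolding until_val_def
  proof (rule cSUP_least)
    fix i
    show "min (\<eta> i * g i) (min_below i (\<lambda>j. \<eta> j * f j)) \<le> max (\<eta> 0 * g 0) (\<eta> 1)"
    proof (cases i)
      case (Suc k)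
      have "\<eta> i * g i \<le> \<eta> i"
        using g \<eta>_unit by (simp add: unit_valued_def mult_left_le)
      also have "\<dots> \<le> \<eta> 1"
        using discounting_antimono[OF \<eta>, of 1 i] Suc by simp
      finally show ?thesis
        by (simp add: min_le_iff_disj le_max_iff_disj)
    qed simp
  qed simp
  show ?thesis
  proof
    assume "until_val \<eta> f g = 1"
    then have "1 \<le> \<eta> 0 * g 0"
      using upper \<eta>1 \<eta>0 by (simp add: le_max_iff_disj)
    moreover have "\<eta> 0 * g 0 \<le> \<eta> 0" "\<eta> 0 * g 0 \<le> g 0"
      using g0 \<eta>0 \<eta>_unit by (auto simp: unit_valued_def mult_left_le mult_left_le_one_le)
    ultimately show "\<eta> 0 = 1 \<and> g 0 = 1"
      using g0 \<eta>0 by linarith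
  next
    assume "\<eta> 0 = 1 \<and> g 0 = 1"
    then show "until_val \<eta> f g = 1"
      using lower until_val_le_1[OF \<eta>_unit f g] by simp
  qed
qed

section \<open>Computations\<close>

lemma suffix_0 [simp]: "suffix 0 \<pi> = \<pi>"
  by (simp add: suffix_def)

lemma suffix_suffix [simp]: "suffix i (suffix j \<pi>) = suffix (j + i) \<pi>"
  by (simp add: suffix_def add.assoc)

definition finite_suffixes :: "'a computation \<Rightarrow> bool" where
  "finite_suffixes \<pi> \<longleftrightarrow> finite (range (\<lambda>i. suffix i \<pi>))"

lemma finite_suffixes_suffix: "finite_suffixes \<pi> \<Longrightarrow> finite_suffixes (suffix j \<pi>)"
  unfolding finite_suffixes_def by (rule finite_subset[rotated]) auto

lemma finite_range_along_suffixes: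
  "finite_suffixes \<pi> \<Longrightarrow> finite (range (\<lambda>i. F (suffix i \<pi>)))"
  unfolding finite_suffixes_def by (metis finite_imageI image_image)

lemma finite_suffixes_if_lasso:
  assumes "lasso \<pi>"
  shows "finite_suffixes \<pi>"
proof -
  obtain u v where "v \<noteq> []" and \<pi>:
    "\<And>n. \<pi> n = (if n < length u then u ! n else v ! ((n - length u) mod length v))"
    using assms unfolding lasso_def by blast
  define n p where "n = length u" and "p = length v"
  have "p > 0"
    using \<open>v \<noteq> []\<close> by (simp add: p_def)
  have periodic: "suffix i \<pi> = suffix (n + (i - n) mod p) \<pi>" if "n \<le> i" for i
  proof
    fix k
    have "(i + k - n) mod p = (n + (i - n) mod p + k - n) mod p"
      using that by (simp add: mod_add_left_eq)
    then show "suffix i \<pi> k = suffix (n + (i - n) mod p) \<pi> k"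
      using that by (simp add: suffix_def \<pi> n_def p_def)
  qed
  have "range (\<lambda>i. suffix i \<pi>) \<subseteq> (\<lambda>i. suffix i \<pi>) ` {..<n + p}"
  proof (rule image_subsetI)
    fix i
    show "suffix i \<pi> \<in> (\<lambda>i. suffix i \<pi>) ` {..<n + p}"
    proof (cases "i < n")
      case False
      then show ?thesis
        using periodic[of i] \<open>p > 0\<close> by (auto intro: image_eqI[where x="n + (i - n) mod p"])
    qed simp
  qed
  then show ?thesis
    unfolding finite_suffixes_def by (rule finite_subset) simp
qed

definition well_discounted :: "'a ltld \<Rightarrow> bool" where
  "well_discounted \<phi> \<longleftrightarrow> (\<forall>\<eta>\<in>disc_funs \<phi>. discounting \<eta>)"

lemma well_discounted_simps [simp]:
  "well_discounted (Neg \<phi>) \<longleftrightarrow> well_discounted \<phi>"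
  "well_discounted (Or \<phi> \<psi>) \<longleftrightarrow> well_discounted \<phi> \<and> well_discounted \<psi>"
  "well_discounted (Next \<phi>) \<longleftrightarrow> well_discounted \<phi>"
  "well_discounted (Until \<phi> \<psi>) \<longleftrightarrow> well_discounted \<phi> \<and> well_discounted \<psi>"
  "well_discounted (UntilD \<eta> \<phi> \<psi>) \<longleftrightarrow> discounting \<eta> \<and> well_discounted \<phi> \<and> well_discounted \<psi>"
  by (auto simp: well_discounted_def)

lemma val_Until:
  "val (Until \<phi> \<psi>) \<pi> = until_val (\<lambda>_. 1) (\<lambda>i. val \<phi> (suffix i \<pi>)) (\<lambda>i. val \<psi> (suffix i \<pi>))"
  by (simp add: until_val_def)

lemma val_UntilD:
  "val (UntilD \<eta> \<phi> \<psi>) \<pi> = until_val \<eta> (\<lambda>i. val \<phi> (suffix i \<pi>)) (\<lambda>i. val \<psi> (suffix i \<pi>))"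
  by (simp add: until_val_def)

declare val.simps(6,7) [simp del]

lemma val_bounds:
  assumes "well_discounted \<phi>"
  shows "0 \<le> val \<phi> \<pi> \<and> val \<phi> \<pi> \<le> 1"
  using assms
proof (induction \<phi> arbitrary: \<pi>)
  case (Until \<phi> \<psi>)
  have "unit_valued (\<lambda>_. 1)" "unit_valued (\<lambda>i. val \<phi> (suffix i \<pi>))"
    "unit_valued (\<lambda>i. val \<psi> (suffix i \<pi>))"
    using Until by (simp_all add: unit_valued_def well_discounted_def)
  then show ?case
    unfolding val_Until using until_val_nonneg until_val_le_1 by blast
next
  case (UntilD \<eta> \<phi> \<psi>)
  have "unit_valued \<eta>" "unit_valued (\<lambda>i. val \<phi> (suffix i \<pi>))"
    "unit_valued (\<lambda>i. val \<psi> (suffix i \<pi>))"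
    using UntilD discounting_unit_valued[of \<eta>]
    by (simp_all add: unit_valued_def well_discounted_def)
  then show ?case
    unfolding val_UntilD using until_val_nonneg until_val_le_1 by blast
qed (auto simp: well_discounted_def le_max_iff_disj)

lemma unit_valued_val: "well_discounted \<phi> \<Longrightarrow> unit_valued (\<lambda>i. val \<phi> (suffix i \<pi>))"
  by (simp add: unit_valued_def val_bounds)

lemma val_Until_pos_iff:
  assumes "well_discounted \<phi>" "well_discounted \<psi>"
  shows "0 < val (Until \<phi> \<psi>) \<pi> \<longleftrightarrow> (\<exists>i. 0 < val \<psi> (suffix i \<pi>) \<and> (\<forall>j<i. 0 < val \<phi> (suffix j \<pi>)))"
  unfolding val_Until
  by (rule until_val_pos_iff) (use assms unit_valued_val in \<open>auto simp: unit_valued_def\<close>)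

lemma val_UntilD_pos_iff:
  assumes "discounting \<eta>" "well_discounted \<phi>" "well_discounted \<psi>"
  shows "0 < val (UntilD \<eta> \<phi> \<psi>) \<pi> \<longleftrightarrow> (\<exists>i. 0 < val \<psi> (suffix i \<pi>) \<and> (\<forall>j<i. 0 < val \<phi> (suffix j \<pi>)))"
  unfolding val_UntilD
  by (rule until_val_pos_iff) (simp_all add: assms discounting_pos discounting_unit_valued unit_valued_val)

lemma val_Until_eq_1_if:
  assumes "well_discounted \<phi>" "well_discounted \<psi>"
    and "val \<psi> (suffix i \<pi>) = 1" "\<forall>j<i. val \<phi> (suffix j \<pi>) = 1"
  shows "val (Until \<phi> \<psi>) \<pi> = 1"
  unfolding val_Until using assms by (intro until_val_eq_1_if) (simp_all add: unit_valued_val)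

lemma val_Until_eq_1_imp:
  assumes "well_discounted \<phi>" "well_discounted \<psi>" "finite_suffixes \<pi>"
    and "val (Until \<phi> \<psi>) \<pi> = 1"
  shows "\<exists>i. val \<psi> (suffix i \<pi>) = 1 \<and> (\<forall>j<i. val \<phi> (suffix j \<pi>) = 1)"
  by (rule until_val_eq_1_imp[OF _ _ _ _ assms(4)[unfolded val_Until]])
    (simp_all add: assms(1-3) unit_valued_val finite_range_along_suffixes)

lemma val_UntilD_eq_1_iff:
  assumes "discounting \<eta>" "well_discounted \<phi>" "well_discounted \<psi>"
  shows "val (UntilD \<eta> \<phi> \<psi>) \<pi> = 1 \<longleftrightarrow> \<eta> 0 = 1 \<and> val \<psi> \<pi> = 1"
  unfolding val_UntilD
  using until_val_discounted_eq_1_iff[OF assms(1) unit_valued_val unit_valued_val] assms(2,3)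
  by simp

section \<open>LTL formulas\<close>

lemma well_discounted_if_ltl: "is_ltl \<phi> \<Longrightarrow> well_discounted \<phi>"
  by (simp add: is_ltl_def well_discounted_def)

lemma ltl_val_0_or_1:
  assumes "is_ltl \<phi>"
  shows "val \<phi> \<pi> = 0 \<or> val \<phi> \<pi> = 1"
  using assms
proof (induction \<phi> arbitrary: \<pi>)
  case (Until \<phi> \<psi>)
  then have ltl: "is_ltl \<phi>" "is_ltl \<psi>"
    by (simp_all add: is_ltl_def)
  then have wd: "well_discounted \<phi>" "well_discounted \<psi>"
    by (simp_all add: well_discounted_if_ltl)
  show ?case
  proof (cases "0 < val (Until \<phi> \<psi>) \<pi>")
    case True
    then obtain i where "0 < val \<psi> (suffix i \<pi>)" "\<forall>j<i. 0 < val \<phi> (suffix j \<pi>)"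
      using val_Until_pos_iff[OF wd] by auto
    then have "val \<psi> (suffix i \<pi>) = 1" "\<forall>j<i. val \<phi> (suffix j \<pi>) = 1"
      using Until.IH ltl by (metis less_irrefl)+
    then show ?thesis
      using val_Until_eq_1_if[OF wd] by blast
  next
    case False
    then show ?thesis
      using val_bounds[of "Until \<phi> \<psi>" \<pi>] wd by simp
  qed
qed (auto simp: is_ltl_def max_def)

lemma not_models_Neg_TT [simp]: "\<not> models \<pi> (Neg TT)"
  by (simp add: models_def)

lemma models_Neg: "is_ltl \<phi> \<Longrightarrow> models \<pi> (Neg \<phi>) \<longleftrightarrow> \<not> models \<pi> \<phi>"
  using ltl_val_0_or_1[of \<phi> \<pi>] by (auto simp: models_def)

lemma models_Or: "is_ltl \<phi> \<Longrightarrow> is_ltl \<psi> \<Longrightarrow> models \<pi> (Or \<phi> \<psi>) \<longleftrightarrow> models \<pi> \<phi> \<or> models \<pi> \<psi>"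
  using ltl_val_0_or_1[of \<phi> \<pi>] ltl_val_0_or_1[of \<psi> \<pi>] by (auto simp: models_def)

lemma models_Next: "models \<pi> (Next \<phi>) \<longleftrightarrow> models (suffix 1 \<pi>) \<phi>"
  by (simp add: models_def)

lemma models_Until:
  assumes "is_ltl \<phi>" "is_ltl \<psi>"
  shows "models \<pi> (Until \<phi> \<psi>) \<longleftrightarrow> (\<exists>i. models (suffix i \<pi>) \<psi> \<and> (\<forall>j<i. models (suffix j \<pi>) \<phi>))"
proof -
  let ?f = "\<lambda>i. val \<phi> (suffix i \<pi>)" and ?g = "\<lambda>i. val \<psi> (suffix i \<pi>)"
  have unit: "unit_valued ?f" "unit_valued ?g"
    using assms by (simp_all add: unit_valued_val well_discounted_if_ltl)
  have "range ?f \<subseteq> {0, 1}" "range ?g \<subseteq> {0, 1}"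
    using assms ltl_val_0_or_1 by blast+
  then have "finite (range ?f)" "finite (range ?g)"
    by (simp_all add: finite_subset)
  then show ?thesis
    unfolding models_def val_Until
    using until_val_eq_1_if[OF unit] until_val_eq_1_imp[OF _ _ unit] by blast
qed

section \<open>The translations\<close>

fun ltl_pos :: "'a ltld \<Rightarrow> 'a ltld" and ltl_one :: "'a ltld \<Rightarrow> 'a ltld" where
  "ltl_pos TT = TT"
| "ltl_pos (Prop p) = Prop p"
| "ltl_pos (Neg \<phi>) = Neg (ltl_one \<phi>)"
| "ltl_pos (Or \<phi> \<psi>) = Or (ltl_pos \<phi>) (ltl_pos \<psi>)"
| "ltl_pos (Next \<phi>) = Next (ltl_pos \<phi>)"
| "ltl_pos (Until \<phi> \<psi>) = Until (ltl_pos \<phi>) (ltl_pos \<psi>)"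
| "ltl_pos (UntilD \<eta> \<phi> \<psi>) = Until (ltl_pos \<phi>) (ltl_pos \<psi>)"
| "ltl_one TT = TT"
| "ltl_one (Prop p) = Prop p"
| "ltl_one (Neg \<phi>) = Neg (ltl_pos \<phi>)"
| "ltl_one (Or \<phi> \<psi>) = Or (ltl_one \<phi>) (ltl_one \<psi>)"
| "ltl_one (Next \<phi>) = Next (ltl_one \<phi>)"
| "ltl_one (Until \<phi> \<psi>) = Until (ltl_one \<phi>) (ltl_one \<psi>)"
| "ltl_one (UntilD \<eta> \<phi> \<psi>) = (if \<eta> 0 = 1 then ltl_one \<psi> else Neg TT)"

lemma is_ltl_translations: "is_ltl (ltl_pos \<phi>)" "is_ltl (ltl_one \<phi>)"
proof -
  have "disc_funs (ltl_pos \<phi>) = {} \<and> disc_funs (ltl_one \<phi>) = {}"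
    by (induction \<phi>) auto
  then show "is_ltl (ltl_pos \<phi>)" "is_ltl (ltl_one \<phi>)"
    by (simp_all add: is_ltl_def)
qed

definition translation_closure :: "'a ltld \<Rightarrow> 'a ltld set" where
  "translation_closure \<phi> =
     (\<Union>\<chi>\<in>subformulas \<phi>. {ltl_pos \<chi>, ltl_one \<chi>, Neg (ltl_pos \<chi>), Neg (ltl_one \<chi>), TT, Neg TT})"

lemma subformulas_self: "\<phi> \<in> subformulas \<phi>"
  by (cases \<phi>) auto

lemma finite_subformulas: "finite (subformulas \<phi>)"
  by (induction \<phi>) auto

lemma subformulas_translations_subset:
  "subformulas (ltl_pos \<phi>) \<union> subformulas (ltl_one \<phi>) \<subseteq> translation_closure \<phi>"
  by (induction \<phi>) (auto simp: translation_closure_def subformulas_self)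

lemma card_translation_closure: "card (translation_closure \<phi>) \<le> 6 * fsize \<phi>"
proof -
  have "card (translation_closure \<phi>)
      \<le> (\<Sum>\<chi>\<in>subformulas \<phi>. card {ltl_pos \<chi>, ltl_one \<chi>, Neg (ltl_pos \<chi>), Neg (ltl_one \<chi>), TT, Neg TT})"
    unfolding translation_closure_def by (rule card_UN_le[OF finite_subformulas])
  also have "\<dots> \<le> (\<Sum>\<chi>\<in>subformulas \<phi>. 6)"
    by (rule sum_mono) (simp add: card_insert_if)
  finally show ?thesis
    by (simp add: fsize_def)
qed

lemma fsize_translations:
  "fsize (ltl_pos \<phi>) \<le> 6 * fsize \<phi>" "fsize (Neg (ltl_one \<phi>)) \<le> 6 * fsize \<phi>"
proof -
  have "finite (translation_closure \<phi>)"
    by (simp add: translation_closure_def finite_subformulas)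
  moreover have "subformulas (Neg (ltl_one \<phi>)) \<subseteq> translation_closure \<phi>"
    using subformulas_translations_subset[of \<phi>] subformulas_self[of \<phi>]
    by (auto simp: translation_closure_def)
  ultimately show "fsize (ltl_pos \<phi>) \<le> 6 * fsize \<phi>" "fsize (Neg (ltl_one \<phi>)) \<le> 6 * fsize \<phi>"
    using subformulas_translations_subset[of \<phi>] card_translation_closure[of \<phi>]
    unfolding fsize_def by (meson card_mono le_sup_iff order_trans)+
qed

section \<open>Correctness of the translations\<close>

lemma translations_sound:
  assumes "well_discounted \<phi>"
  shows "(0 < val \<phi> \<pi> \<longrightarrow> models \<pi> (ltl_pos \<phi>)) \<and> (models \<pi> (ltl_one \<phi>) \<longrightarrow> val \<phi> \<pi> = 1)"
  using assms
proof (induction \<phi> arbitrary: \<pi>)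
  case (Neg \<phi>)
  then have "(0 < val \<phi> \<pi> \<longrightarrow> models \<pi> (ltl_pos \<phi>)) \<and> (models \<pi> (ltl_one \<phi>) \<longrightarrow> val \<phi> \<pi> = 1)"
    by simp
  then show ?case
    using val_bounds[of \<phi> \<pi>] Neg.prems by (auto simp: models_Neg is_ltl_translations)
next
  case (Or \<phi> \<psi>)
  then show ?case
    using val_bounds[of \<phi> \<pi>] val_bounds[of \<psi> \<pi>]
    by (auto simp: models_Or is_ltl_translations less_max_iff_disj max_def)
next
  case (Next \<phi>)
  then show ?case
    by (simp add: models_Next)
next
  case (Until \<phi> \<psi>)
  then have wd: "well_discounted \<phi>" "well_discounted \<psi>"
    and IH: "\<And>\<pi>. (0 < val \<phi> \<pi> \<longrightarrow> models \<pi> (ltl_pos \<phi>)) \<and> (models \<pi> (ltl_one \<phi>) \<longrightarrow> val \<phi> \<pi> = 1)"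
      "\<And>\<pi>. (0 < val \<psi> \<pi> \<longrightarrow> models \<pi> (ltl_pos \<psi>)) \<and> (models \<pi> (ltl_one \<psi>) \<longrightarrow> val \<psi> \<pi> = 1)"
    by simp_all
  show ?case
    using IH by (auto simp: val_Until_pos_iff[OF wd] models_Until is_ltl_translations
        intro: val_Until_eq_1_if[OF wd])
next
  case (UntilD \<eta> \<phi> \<psi>)
  then have wd: "discounting \<eta>" "well_discounted \<phi>" "well_discounted \<psi>"
    and IH: "\<And>\<pi>. 0 < val \<phi> \<pi> \<longrightarrow> models \<pi> (ltl_pos \<phi>)"
      "\<And>\<pi>. (0 < val \<psi> \<pi> \<longrightarrow> models \<pi> (ltl_pos \<psi>)) \<and> (models \<pi> (ltl_one \<psi>) \<longrightarrow> val \<psi> \<pi> = 1)"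
    by simp_all
  show ?case
    using IH by (auto simp: val_UntilD_pos_iff[OF wd] val_UntilD_eq_1_iff[OF wd] models_Until
        is_ltl_translations)
qed (simp_all add: models_def)

lemma translations_complete:
  assumes "well_discounted \<phi>" "finite_suffixes \<pi>"
  shows "(models \<pi> (ltl_pos \<phi>) \<longrightarrow> 0 < val \<phi> \<pi>) \<and> (val \<phi> \<pi> = 1 \<longrightarrow> models \<pi> (ltl_one \<phi>))"
  using assms
proof (induction \<phi> arbitrary: \<pi>)
  case (Neg \<phi>)
  then have "(models \<pi> (ltl_pos \<phi>) \<longrightarrow> 0 < val \<phi> \<pi>) \<and> (val \<phi> \<pi> = 1 \<longrightarrow> models \<pi> (ltl_one \<phi>))"
    by simp
  then show ?case
    using val_bounds[of \<phi> \<pi>] Neg.prems by (auto simp: models_Neg is_ltl_translations)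
next
  case (Or \<phi> \<psi>)
  then have "(models \<pi> (ltl_pos \<phi>) \<longrightarrow> 0 < val \<phi> \<pi>) \<and> (val \<phi> \<pi> = 1 \<longrightarrow> models \<pi> (ltl_one \<phi>))"
    "(models \<pi> (ltl_pos \<psi>) \<longrightarrow> 0 < val \<psi> \<pi>) \<and> (val \<psi> \<pi> = 1 \<longrightarrow> models \<pi> (ltl_one \<psi>))"
    by simp_all
  then show ?case
    by (auto simp: models_Or is_ltl_translations max_def)
next
  case (Next \<phi>)
  then show ?case
    by (simp add: models_Next finite_suffixes_suffix)
next
  case (Until \<phi> \<psi>)
  then have wd: "well_discounted \<phi>" "well_discounted \<psi>"
    and IH: "\<And>i. (models (suffix i \<pi>) (ltl_pos \<phi>) \<longrightarrow> 0 < val \<phi> (suffix i \<pi>)) \<and>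
        (val \<phi> (suffix i \<pi>) = 1 \<longrightarrow> models (suffix i \<pi>) (ltl_one \<phi>))"
      "\<And>i. (models (suffix i \<pi>) (ltl_pos \<psi>) \<longrightarrow> 0 < val \<psi> (suffix i \<pi>)) \<and>
        (val \<psi> (suffix i \<pi>) = 1 \<longrightarrow> models (suffix i \<pi>) (ltl_one \<psi>))"
    by (simp_all add: finite_suffixes_suffix)
  show ?case
    unfolding val_Until_pos_iff[OF wd] ltl_pos.simps ltl_one.simps
      models_Until[OF is_ltl_translations(1,1)] models_Until[OF is_ltl_translations(2,2)]
    using IH val_Until_eq_1_imp[OF wd \<open>finite_suffixes \<pi>\<close>] by blast
next
  case (UntilD \<eta> \<phi> \<psi>)
  then have wd: "discounting \<eta>" "well_discounted \<phi>" "well_discounted \<psi>"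
    and IH: "\<And>i. models (suffix i \<pi>) (ltl_pos \<phi>) \<longrightarrow> 0 < val \<phi> (suffix i \<pi>)"
      "\<And>i. models (suffix i \<pi>) (ltl_pos \<psi>) \<longrightarrow> 0 < val \<psi> (suffix i \<pi>)"
      "val \<psi> \<pi> = 1 \<longrightarrow> models \<pi> (ltl_one \<psi>)"
    by (simp_all add: finite_suffixes_suffix)
  show ?case
    using IH by (auto simp: val_UntilD_pos_iff[OF wd] val_UntilD_eq_1_iff[OF wd] models_Until
        is_ltl_translations)
qed (simp_all add: models_def)

theorem lemma1:
  shows "\<exists>c::nat. \<forall>(D :: (nat \<Rightarrow> real) set) (\<phi> :: ('a::finite) ltld).
     (\<forall>\<eta>\<in>D. discounting \<eta>) \<longrightarrow> is_ltld_over D \<phi> \<longrightarrow>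
     (\<exists>\<phi>pos \<phi>lt1. is_ltl \<phi>pos \<and> is_ltl \<phi>lt1 \<and>
        fsize \<phi>pos \<le> c * fsize \<phi> \<and> fsize \<phi>lt1 \<le> c * fsize \<phi> \<and>
        (\<forall>\<pi>. (val \<phi> \<pi> > 0 \<longrightarrow> models \<pi> \<phi>pos) \<and> (val \<phi> \<pi> < 1 \<longrightarrow> models \<pi> \<phi>lt1)) \<and>
        (\<forall>\<pi>. lasso \<pi> \<longrightarrow> (models \<pi> \<phi>pos \<longrightarrow> val \<phi> \<pi> > 0) \<and> (models \<pi> \<phi>lt1 \<longrightarrow> val \<phi> \<pi> < 1)))"
proof (intro exI[of _ 6] allI impI, goal_cases)
  case (1 D \<phi>)
  then have wd: "well_discounted \<phi>"
    by (auto simp: well_discounted_def is_ltld_over_def)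
  have lt1_iff: "models \<pi> (Neg (ltl_one \<phi>)) \<longleftrightarrow> \<not> models \<pi> (ltl_one \<phi>)"
    and val_lt1_iff: "val \<phi> \<pi> < 1 \<longleftrightarrow> val \<phi> \<pi> \<noteq> 1" for \<pi>
    using models_Neg[OF is_ltl_translations(2)] val_bounds[OF wd, of \<pi>] by auto
  have "is_ltl (Neg (ltl_one \<phi>))"
    using is_ltl_translations(2) by (simp add: is_ltl_def)
  moreover have "\<forall>\<pi>. (0 < val \<phi> \<pi> \<longrightarrow> models \<pi> (ltl_pos \<phi>)) \<and>
      (val \<phi> \<pi> < 1 \<longrightarrow> models \<pi> (Neg (ltl_one \<phi>)))"
    using translations_sound[OF wd] unfolding lt1_iff val_lt1_iff by blast
  moreover have "\<forall>\<pi>. lasso \<pi> \<longrightarrow> (models \<pi> (ltl_pos \<phi>) \<longrightarrow> 0 < val \<phi> \<pi>) \<and>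
      (models \<pi> (Neg (ltl_one \<phi>)) \<longrightarrow> val \<phi> \<pi> < 1)"
    using translations_complete[OF wd finite_suffixes_if_lasso] unfolding lt1_iff val_lt1_iff by blast
  ultimately show ?case
    using is_ltl_translations(1) fsize_translations by blast
qed

end
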